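(* Consider the lower-bound type system, and assume the program is well-typed w.r.t. the signature $\Sigma$ in that system. Let $\models E:\Gamma$, $E\vdash e\Downarrow v$, and suppose $\Sigma;\Gamma\vdash^{q}_{q'}e:A$ is derivable in the lower-bound type system. Then for all $p,r\in\mathbb Q_{\ge0}$ with $p<q+\Phi_E(\Gamma)+r$ there is no $p'\in\mathbb Q_{\ge0}$ such that $E\vdash^{p}_{p'}e\Downarrow v$ and $p'\ge q'+\Phi(v:A)+r$.
   Context: Base types: $T ::= \mathsf{unit}\mid\mathsf{bool}\mid\mathsf{int}\mid L(T)\mid T*T$. Values: $v ::= () \mid \mathsf{true}\mid\mathsf{false}\mid n\ (n\in\mathbb Z)\mid [v_1,\dots,v_n]\ (n\ge 0$, the empty list being $\mathsf{nil})\mid (v_1,v_2)$. Value typing $\models v:T$: $()$ has type $\mathsf{unit}$, booleans have type $\mathsf{bool}$, integers have type $\mathsf{int}$, $(v_1,v_2):T_1*T_2$ if $\models v_i:T_i$, and $[v_1,\dots,v_n]:L(T)$ if every $\models v_i:T$ (so $\mathsf{nil}$ has every list type). Expressions (let-normal form; $x,x_i$ are variables, $f$ function identifiers): $e ::= () \mid \mathsf{true}\mid \mathsf{false}\mid n\mid x\mid \mathrm{op}_\diamond(x_1,x_2)\mid \mathrm{app}(f,x)\mid \mathrm{if}(x,e_t,e_f)\mid \mathrm{let}(x,e_1,x.e_2)\mid \mathrm{pair}(x_1,x_2)\mid \mathrm{match}(x,(x_1,x_2).e)\mid \mathsf{nil}\mid \mathrm{cons}(x_1,x_2)\mid\mathrm{match}(x,e_1,(x_h,x_t).e_2)\mid\mathrm{share}(x,(x_1,x_2).e)$,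 with $\diamond\in\{+,-,*,\mathrm{div},\mathrm{mod},=,<>,<,>,\mathrm{and},\mathrm{or}\}$. A program fixes for each function identifier $f$ a body $e_f$ with a single parameter variable $y^f$. An environment $E$ is a finite map from variables to values. Cost semantics: fix arbitrary rational constants $K^{\mathrm{unit}},K^{\mathrm{bool}},K^{\mathrm{int}},K^{\mathrm{nil}},K^{\mathrm{var}},K^{\mathrm{op}},K^{\mathrm{app}},K^{\mathrm{let}},K^{\mathrm{cond}},K^{\mathrm{pair}},K^{\mathrm{matchP}},K^{\mathrm{cons}},K^{\mathrm{matchN}},K^{\mathrm{matchL}}$. The judgement $E\vdash^{q}_{q'} e\Downarrow v$ (all counters $q,q'$ occurring in derivations are in $\mathbb Q_{\ge0}$) is defined inductively: $E\vdash^{q+K^{c}}_{q}c\Downarrow c$ for constants $c\in\{(),\mathsf{true},\mathsf{false},n,\mathsf{nil}\}$ with the corresponding constant $K^{\mathrm{unit}},K^{\mathrm{bool}},K^{\mathrm{int}},K^{\mathrm{nil}}$; $E\vdash^{q+K^{\mathrm{var}}}_q x\Downarrow E(x)$ for $x\in\mathrm{dom}(E)$; $E\vdash^{q+K^{\mathrm{op}}}_q\mathrm{op}_\diamond(x_1,x_2)\Downarrow E(x_1)\diamond E(x_2)$; $E\vdash^{q+K^{\mathrm{pair}}}_q \mathrm{pair}(x_1,x_2)\Downarrow (E(x_1),E(x_2))$; $E\vdash^{q+K^{\mathrm{cons}}}_q\mathrm{cons}(x_h,x_t)\Downarrow[v_1,\dots,v_n]$ if $E(x_h)=v_1$ and $E(x_t)=[v_2,\dots,v_n]$;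 if $E[y^f\mapsto E(x)]\vdash^q_{q'}e_f\Downarrow v$ then $E\vdash^{q+K^{\mathrm{app}}}_{q'}\mathrm{app}(f,x)\Downarrow v$; if $E\vdash^{q-K^{\mathrm{let}}}_{q_1}e_1\Downarrow v_1$ and $E[x\mapsto v_1]\vdash^{q_1}_{q'}e_2\Downarrow v$ then $E\vdash^q_{q'}\mathrm{let}(x,e_1,x.e_2)\Downarrow v$; if $E(x)=\mathsf{true}$ and $E\vdash^{q-K^{\mathrm{cond}}}_{q'}e_t\Downarrow v$ (resp. $E(x)=\mathsf{false}$ and $E\vdash^{q-K^{\mathrm{cond}}}_{q'}e_f\Downarrow v$) then $E\vdash^q_{q'}\mathrm{if}(x,e_t,e_f)\Downarrow v$; if $E(x)=(v_1,v_2)$ and $E[x_1\mapsto v_1,x_2\mapsto v_2]\vdash^{q-K^{\mathrm{matchP}}}_{q'}e\Downarrow v$ then $E\vdash^q_{q'}\mathrm{match}(x,(x_1,x_2).e)\Downarrow v$; if $E(x)=\mathsf{nil}$ and $E\vdash^{q-K^{\mathrm{matchN}}}_{q'}e_1\Downarrow v$ then $E\vdash^q_{q'}\mathrm{match}(x,e_1,(x_h,x_t).e_2)\Downarrow v$; if $E(x)=[v_1,\dots,v_n]$ with $n\ge1$ and $E[x_h\mapsto v_1,x_t\mapsto[v_2,\dots,v_n]]\vdash^{q-K^{\mathrm{matchL}}}_{q'}e_2\Downarrow v$ then $E\vdash^q_{q'}\mathrm{match}(x,e_1,(x_h,x_t).e_2)\Downarrow v$; if $E(x)=v_1$ and $(E\setminus\{x\})[x_1\mapsto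 v_1,x_2\mapsto v_1]\vdash^q_{q'}e\Downarrow v$ then $E\vdash^q_{q'}\mathrm{share}(x,(x_1,x_2).e)\Downarrow v$. We write $E\vdash e\Downarrow v$ if $E\vdash^q_{q'}e\Downarrow v$ for some $q,q'$. Resource-annotated types: $A ::= \mathsf{unit}\mid\mathsf{bool}\mid\mathsf{int}\mid L^p(A)\mid A*A$ with $p\in\mathbb Q_{\ge0}$; $|A|$ denotes the base type obtained by erasing annotations. An annotated context $\Gamma$ is a finite map from variables to annotated types; $\Gamma_1,\Gamma_2$ denotes the union of contexts with disjoint domains (contexts are unordered). $\models E:\Gamma$ means $\models E(x):|\Gamma(x)|$ for all $x\in\mathrm{dom}(\Gamma)$. Potential: $\Phi(v:A)=0$ for $A\in\{\mathsf{unit},\mathsf{bool},\mathsf{int}\}$; $\Phi((v_1,v_2):A_1*A_2)=\Phi(v_1:A_1)+\Phi(v_2:A_2)$; $\Phi([v_1,\dots,v_n]:L^p(A))=n\cdot p+\sum_{i=1}^n\Phi(v_i:A)$; $\Phi_E(\Gamma)=\sum_{x\in\mathrm{dom}(\Gamma)}\Phi(E(x):\Gamma(x))$. Sharing relation: $\curlyvee(A\mid A,A)$ for $A\in\{\mathsf{unit},\mathsf{bool},\mathsf{int}\}$; $\curlyvee(A*B\mid A_1*B_1,A_2*B_2)$ if $\curlyvee(A\mid A_1,A_2)$ and $\curlyvee(B\mid B_1,B_2)$; $\curlyvee(L^p(A)\mid L^{p_1}(A_1),L^{p_2}(A_2))$ if $\curlyvee(A\mid A_1,A_2)$ and $p=p_1+p_2$.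 Subtyping $\preceq$: $A\preceq A$ for atoms; $L^{p_1}(A_1)\preceq L^{p_2}(A_2)$ if $A_1\preceq A_2$ and $p_1\le p_2$; $A_1*B_1\preceq A_2*B_2$ if $A_1\preceq A_2$ and $B_1\preceq B_2$. A signature $\Sigma$ maps function identifiers to nonempty sets of annotated function types $A_1\xrightarrow{q/q'}A_2$ ($q,q'\in\mathbb Q_{\ge0}$). Typing judgements $\Sigma;\Gamma\vdash^{q}_{q'}e:A$ with $q,q'\in\mathbb Q_{\ge0}$ (every annotation in a rule instance must be a nonnegative rational). Syntax-directed rules: $\Sigma;\emptyset\vdash^{K^{\mathrm{unit}}}_0():\mathsf{unit}$; $\Sigma;\emptyset\vdash^{K^{\mathrm{bool}}}_0 b:\mathsf{bool}$; $\Sigma;\emptyset\vdash^{K^{\mathrm{int}}}_0 n:\mathsf{int}$; $\Sigma;\emptyset\vdash^{K^{\mathrm{nil}}}_0\mathsf{nil}:L^p(A)$; $\Sigma;x:A\vdash^{K^{\mathrm{var}}}_0x:A$; $\Sigma;x_1:\mathsf{bool},x_2:\mathsf{bool}\vdash^{K^{\mathrm{op}}}_0\mathrm{op}_\diamond(x_1,x_2):\mathsf{bool}$ for $\diamond\in\{\mathrm{and},\mathrm{or}\}$; $\Sigma;x_1:\mathsf{int},x_2:\mathsf{int}\vdash^{K^{\mathrm{op}}}_0\mathrm{op}_\diamond(x_1,x_2):\mathsf{bool}$ for comparisons and $:\mathsf{int}$ for $+,-,*,\mathrm{div},\mathrm{mod}$; if $A_1\xrightarrow{q/q'}A_2\in\Sigma(f)$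 then $\Sigma;x:A_1\vdash^{q+K^{\mathrm{app}}}_{q'}\mathrm{app}(f,x):A_2$; from $\Sigma;\Gamma_1\vdash^{q-K^{\mathrm{let}}}_{q_1}e_1:A_1$ and $\Sigma;\Gamma_2,x:A_1\vdash^{q_1}_{q'}e_2:A_2$ infer $\Sigma;\Gamma_1,\Gamma_2\vdash^q_{q'}\mathrm{let}(x,e_1,x.e_2):A_2$; from $\Sigma;\Gamma\vdash^{q-K^{\mathrm{cond}}}_{q'}e_t:A$ and $\Sigma;\Gamma\vdash^{q-K^{\mathrm{cond}}}_{q'}e_f:A$ infer $\Sigma;\Gamma,x:\mathsf{bool}\vdash^q_{q'}\mathrm{if}(x,e_t,e_f):A$; $\Sigma;x_1:A_1,x_2:A_2\vdash^{K^{\mathrm{pair}}}_0\mathrm{pair}(x_1,x_2):A_1*A_2$; from $\Sigma;\Gamma,x_1:A_1,x_2:A_2\vdash^{q-K^{\mathrm{matchP}}}_{q'}e:A$ infer $\Sigma;\Gamma,x:A_1*A_2\vdash^q_{q'}\mathrm{match}(x,(x_1,x_2).e):A$; $\Sigma;x_h:A,x_t:L^p(A)\vdash^{p+K^{\mathrm{cons}}}_0\mathrm{cons}(x_h,x_t):L^p(A)$; from $\Sigma;\Gamma\vdash^{q-K^{\mathrm{matchN}}}_{q'}e_1:B$ and $\Sigma;\Gamma,x_h:A,x_t:L^p(A)\vdash^{q+p-K^{\mathrm{matchL}}}_{q'}e_2:B$ infer $\Sigma;\Gamma,x:L^p(A)\vdash^q_{q'}\mathrm{match}(x,e_1,(x_h,x_t).e_2):B$;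 from $\Sigma;\Gamma,x_1:A_1,x_2:A_2\vdash^q_{q'}e:B$ and $\curlyvee(A\mid A_1,A_2)$ infer $\Sigma;\Gamma,x:A\vdash^q_{q'}\mathrm{share}(x,(x_1,x_2).e):B$. Structural rules of the lower-bound system: (Relax) from $\Sigma;\Gamma\vdash^p_{p'}e:A$, $q\ge p$ and $q-p\le q'-p'$ infer $\Sigma;\Gamma\vdash^q_{q'}e:A$; (Weakening) from $\Sigma;\Gamma\vdash^q_{q'}e:B$ and $\curlyvee(A\mid A,A)$ infer $\Sigma;\Gamma,x:A\vdash^q_{q'}e:B$; (Subtype) from $\Sigma;\Gamma\vdash^q_{q'}e:A$ and $A\preceq B$ infer $\Sigma;\Gamma\vdash^q_{q'}e:B$; (Supertype) from $\Sigma;\Gamma,x:B\vdash^q_{q'}e:C$ and $A\preceq B$ infer $\Sigma;\Gamma,x:A\vdash^q_{q'}e:C$. The program is well-typed w.r.t. $\Sigma$ in this system if for every $f$ and every $A_1\xrightarrow{q/q'}A_2\in\Sigma(f)$, $\Sigma;y^f:A_1\vdash^q_{q'}e_f:A_2$ is derivable. *)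

theory Defs
  imports Main "HOL.Rat"
begin

datatype bty = TUnit | TBool | TInt | TList bty | TProd bty bty

datatype val = UnitV | BoolV bool | IntV int | ListV "val list" | PairV val val

fun has_type :: "val \<Rightarrow> bty \<Rightarrow> bool" where
  "has_type UnitV TUnit = True"
| "has_type (BoolV b) TBool = True"
| "has_type (IntV n) TInt = True"
| "has_type (PairV v1 v2) (TProd T1 T2) = (has_type v1 T1 \<and> has_type v2 T2)"
| "has_type (ListV vs) (TList T) = list_all (\<lambda>v. has_type v T) vs"
| "has_type _ _ = False"

datatype binop = Plus | Minus | Times | Div | Mod | Eq | Neq | Lt | Gt | And | Or

datatype ('x, 'f) expr =
    EUnit | ETrue | EFalse | ENum int | EVar 'x
  | EOp binop 'x 'x
  | EApp 'f 'x
  | EIf 'x "('x, 'f) expr" "('x, 'f) expr"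
  | ELet 'x "('x, 'f) expr" "('x, 'f) expr"          (* let(x, e1, x.e2) *)
  | EPair 'x 'x
  | EMatchP 'x 'x 'x "('x, 'f) expr"                 (* match(x, (x1,x2).e) *)
  | ENil
  | ECons 'x 'x
  | EMatchL 'x "('x, 'f) expr" 'x 'x "('x, 'f) expr"  (* match(x, e1, (xh,xt).e2) *)
  | EShare 'x 'x 'x "('x, 'f) expr"                  (* share(x, (x1,x2).e) *)

fun eval_op :: "binop \<Rightarrow> val \<Rightarrow> val \<Rightarrow> val option" where
  "eval_op Plus (IntV a) (IntV b) = Some (IntV (a + b))"
| "eval_op Minus (IntV a) (IntV b) = Some (IntV (a - b))"
| "eval_op Times (IntV a) (IntV b) = Some (IntV (a * b))"
| "eval_op Div (IntV a) (IntV b) = Some (IntV (a div b))"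
| "eval_op Mod (IntV a) (IntV b) = Some (IntV (a mod b))"
| "eval_op Eq (IntV a) (IntV b) = Some (BoolV (a = b))"
| "eval_op Neq (IntV a) (IntV b) = Some (BoolV (a \<noteq> b))"
| "eval_op Lt (IntV a) (IntV b) = Some (BoolV (a < b))"
| "eval_op Gt (IntV a) (IntV b) = Some (BoolV (a > b))"
| "eval_op And (BoolV a) (BoolV b) = Some (BoolV (a \<and> b))"
| "eval_op Or (BoolV a) (BoolV b) = Some (BoolV (a \<or> b))"
| "eval_op _ _ _ = None"

datatype kind = Kunit | Kbool | Kint | Knil | Kvar | Kop | Kapp | Klet | Kcond | Kpair
  | KmatchP | Kcons | KmatchN | KmatchL

type_synonym costs = "kind \<Rightarrow> rat"

type_synonym ('x) env = "'x \<Rightarrow> val option"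

section \<open>Cost semantics  E |-^q_q' e \<Down> v\<close>

(* par f = parameter variable y^f, body f = body e_f.
   All counters occurring in a derivation are nonnegative: every rule requires
   its conclusion counters to be >= 0 (premise counters are covered by the
   premises' own rules). *)
inductive eval :: "costs \<Rightarrow> ('f \<Rightarrow> 'x) \<Rightarrow> ('f \<Rightarrow> ('x, 'f) expr) \<Rightarrow> 'x env
                    \<Rightarrow> rat \<Rightarrow> rat \<Rightarrow> ('x, 'f) expr \<Rightarrow> val \<Rightarrow> bool"
  for K :: costs and par :: "'f \<Rightarrow> 'x" and body :: "'f \<Rightarrow> ('x, 'f) expr" where
  ev_unit: "\<lbrakk>0 \<le> q'; 0 \<le> q' + K Kunit\<rbrakk> \<Longrightarrow> eval K par body E (q' + K Kunit) q' EUnit UnitV"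
| ev_true: "\<lbrakk>0 \<le> q'; 0 \<le> q' + K Kbool\<rbrakk> \<Longrightarrow> eval K par body E (q' + K Kbool) q' ETrue (BoolV True)"
| ev_false: "\<lbrakk>0 \<le> q'; 0 \<le> q' + K Kbool\<rbrakk> \<Longrightarrow> eval K par body E (q' + K Kbool) q' EFalse (BoolV False)"
| ev_int: "\<lbrakk>0 \<le> q'; 0 \<le> q' + K Kint\<rbrakk> \<Longrightarrow> eval K par body E (q' + K Kint) q' (ENum n) (IntV n)"
| ev_nil: "\<lbrakk>0 \<le> q'; 0 \<le> q' + K Knil\<rbrakk> \<Longrightarrow> eval K par body E (q' + K Knil) q' ENil (ListV [])"
| ev_var: "\<lbrakk>E x = Some v; 0 \<le> q'; 0 \<le> q' + K Kvar\<rbrakk> \<Longrightarrow> eval K par body E (q' + K Kvar) q' (EVar x) v"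
| ev_op: "\<lbrakk>E x1 = Some v1; E x2 = Some v2; eval_op bop v1 v2 = Some v; 0 \<le> q'; 0 \<le> q' + K Kop\<rbrakk>
          \<Longrightarrow> eval K par body E (q' + K Kop) q' (EOp bop x1 x2) v"
| ev_pair: "\<lbrakk>E x1 = Some v1; E x2 = Some v2; 0 \<le> q'; 0 \<le> q' + K Kpair\<rbrakk>
          \<Longrightarrow> eval K par body E (q' + K Kpair) q' (EPair x1 x2) (PairV v1 v2)"
| ev_cons: "\<lbrakk>E xh = Some v1; E xt = Some (ListV vs); 0 \<le> q'; 0 \<le> q' + K Kcons\<rbrakk>
          \<Longrightarrow> eval K par body E (q' + K Kcons) q' (ECons xh xt) (ListV (v1 # vs))"
| ev_app: "\<lbrakk>E x = Some u; eval K par body (E(par f \<mapsto> u)) q q' (body f) v; 0 \<le> q + K Kapp\<rbrakk>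
          \<Longrightarrow> eval K par body E (q + K Kapp) q' (EApp f x) v"
| ev_let: "\<lbrakk>eval K par body E (q - K Klet) q1 e1 v1; eval K par body (E(x \<mapsto> v1)) q1 q' e2 v; 0 \<le> q\<rbrakk>
          \<Longrightarrow> eval K par body E q q' (ELet x e1 e2) v"
| ev_if_true: "\<lbrakk>E x = Some (BoolV True); eval K par body E (q - K Kcond) q' et v; 0 \<le> q\<rbrakk>
          \<Longrightarrow> eval K par body E q q' (EIf x et ef) v"
| ev_if_false: "\<lbrakk>E x = Some (BoolV False); eval K par body E (q - K Kcond) q' ef v; 0 \<le> q\<rbrakk>
          \<Longrightarrow> eval K par body E q q' (EIf x et ef) v"
| ev_matchP: "\<lbrakk>E x = Some (PairV v1 v2); eval K par body (E(x1 \<mapsto> v1, x2 \<mapsto> v2)) (q - K KmatchP) q' e v; 0 \<le> q\<rbrakk>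
          \<Longrightarrow> eval K par body E q q' (EMatchP x x1 x2 e) v"
| ev_matchN: "\<lbrakk>E x = Some (ListV []); eval K par body E (q - K KmatchN) q' e1 v; 0 \<le> q\<rbrakk>
          \<Longrightarrow> eval K par body E q q' (EMatchL x e1 xh xt e2) v"
| ev_matchC: "\<lbrakk>E x = Some (ListV (v1 # vs)); eval K par body (E(xh \<mapsto> v1, xt \<mapsto> ListV vs)) (q - K KmatchL) q' e2 v; 0 \<le> q\<rbrakk>
          \<Longrightarrow> eval K par body E q q' (EMatchL x e1 xh xt e2) v"
| ev_share: "\<lbrakk>E x = Some v1; eval K par body ((E(x := None))(x1 \<mapsto> v1, x2 \<mapsto> v1)) q q' e v\<rbrakk>
          \<Longrightarrow> eval K par body E q q' (EShare x x1 x2 e) v"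

definition evaluates :: "costs \<Rightarrow> ('f \<Rightarrow> 'x) \<Rightarrow> ('f \<Rightarrow> ('x, 'f) expr) \<Rightarrow> 'x env
                    \<Rightarrow> ('x, 'f) expr \<Rightarrow> val \<Rightarrow> bool" where
  "evaluates K par body E e v \<longleftrightarrow> (\<exists>q q'. eval K par body E q q' e v)"

datatype aty = AUnit | ABool | AInt | AList rat aty | AProd aty aty

fun erase :: "aty \<Rightarrow> bty" where
  "erase AUnit = TUnit"
| "erase ABool = TBool"
| "erase AInt = TInt"
| "erase (AList p A) = TList (erase A)"
| "erase (AProd A B) = TProd (erase A) (erase B)"

fun wf_aty :: "aty \<Rightarrow> bool" where
  "wf_aty (AList p A) = (0 \<le> p \<and> wf_aty A)"
| "wf_aty (AProd A B) = (wf_aty A \<and> wf_aty B)"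
| "wf_aty _ = True"

type_synonym 'x ctx = "'x \<Rightarrow> aty option"

definition wf_ctx :: "'x ctx \<Rightarrow> bool" where
  "wf_ctx \<Gamma> \<longleftrightarrow> finite (dom \<Gamma>) \<and> (\<forall>x A. \<Gamma> x = Some A \<longrightarrow> wf_aty A)"

fun pot :: "val \<Rightarrow> aty \<Rightarrow> rat" where
  "pot (PairV v1 v2) (AProd A B) = pot v1 A + pot v2 B"
| "pot (ListV vs) (AList p A) = of_nat (length vs) * p + sum_list (map (\<lambda>v. pot v A) vs)"
| "pot _ _ = 0"

definition pot_env :: "'x env \<Rightarrow> 'x ctx \<Rightarrow> rat" where
  "pot_env E \<Gamma> = (\<Sum>x\<in>dom \<Gamma>. pot (the (E x)) (the (\<Gamma> x)))"

definition env_typed :: "'x env \<Rightarrow> 'x ctx \<Rightarrow> bool" where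
  "env_typed E \<Gamma> \<longleftrightarrow> (\<forall>x A. \<Gamma> x = Some A \<longrightarrow> (\<exists>v. E x = Some v \<and> has_type v (erase A)))"

inductive share :: "aty \<Rightarrow> aty \<Rightarrow> aty \<Rightarrow> bool" where
  sh_unit: "share AUnit AUnit AUnit"
| sh_bool: "share ABool ABool ABool"
| sh_int: "share AInt AInt AInt"
| sh_prod: "\<lbrakk>share A A1 A2; share B B1 B2\<rbrakk> \<Longrightarrow> share (AProd A B) (AProd A1 B1) (AProd A2 B2)"
| sh_list: "\<lbrakk>share A A1 A2; p = p1 + p2\<rbrakk> \<Longrightarrow> share (AList p A) (AList p1 A1) (AList p2 A2)"

inductive subty :: "aty \<Rightarrow> aty \<Rightarrow> bool" where
  st_unit: "subty AUnit AUnit"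
| st_bool: "subty ABool ABool"
| st_int: "subty AInt AInt"
| st_list: "\<lbrakk>subty A1 A2; p1 \<le> p2\<rbrakk> \<Longrightarrow> subty (AList p1 A1) (AList p2 A2)"
| st_prod: "\<lbrakk>subty A1 A2; subty B1 B2\<rbrakk> \<Longrightarrow> subty (AProd A1 B1) (AProd A2 B2)"

(* signature: f \<mapsto> set of annotated function types (A1, q, q', A2) = A1 -q/q'-> A2 *)
type_synonym 'f sig = "'f \<Rightarrow> (aty \<times> rat \<times> rat \<times> aty) set"

definition ok :: "'x ctx \<Rightarrow> rat \<Rightarrow> rat \<Rightarrow> aty \<Rightarrow> bool" where
  "ok \<Gamma> q q' A \<longleftrightarrow> 0 \<le> q \<and> 0 \<le> q' \<and> wf_ctx \<Gamma> \<and> wf_aty A"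

section \<open>Lower-bound type system  \<Sigma>; \<Gamma> |-^q_q' e : A\<close>

inductive typed :: "costs \<Rightarrow> 'f sig \<Rightarrow> 'x ctx \<Rightarrow> rat \<Rightarrow> rat \<Rightarrow> ('x, 'f) expr \<Rightarrow> aty \<Rightarrow> bool"
  for K :: costs and \<Sigma> :: "'f sig" where
  t_unit: "ok (Map.empty :: 'x ctx) (K Kunit) 0 AUnit \<Longrightarrow> typed K \<Sigma> Map.empty (K Kunit) 0 EUnit AUnit"
| t_true: "ok (Map.empty :: 'x ctx) (K Kbool) 0 ABool \<Longrightarrow> typed K \<Sigma> Map.empty (K Kbool) 0 ETrue ABool"
| t_false: "ok (Map.empty :: 'x ctx) (K Kbool) 0 ABool \<Longrightarrow> typed K \<Sigma> Map.empty (K Kbool) 0 EFalse ABool"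
| t_int: "ok (Map.empty :: 'x ctx) (K Kint) 0 AInt \<Longrightarrow> typed K \<Sigma> Map.empty (K Kint) 0 (ENum n) AInt"
| t_nil: "ok (Map.empty :: 'x ctx) (K Knil) 0 (AList p A) \<Longrightarrow> typed K \<Sigma> Map.empty (K Knil) 0 ENil (AList p A)"
| t_var: "ok [x \<mapsto> A] (K Kvar) 0 A \<Longrightarrow> typed K \<Sigma> [x \<mapsto> A] (K Kvar) 0 (EVar x) A"
| t_op_bool: "\<lbrakk>bop \<in> {And, Or}; x1 \<noteq> x2; ok [x1 \<mapsto> ABool, x2 \<mapsto> ABool] (K Kop) 0 ABool\<rbrakk>
    \<Longrightarrow> typed K \<Sigma> [x1 \<mapsto> ABool, x2 \<mapsto> ABool] (K Kop) 0 (EOp bop x1 x2) ABool"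
| t_op_cmp: "\<lbrakk>bop \<in> {Eq, Neq, Lt, Gt}; x1 \<noteq> x2; ok [x1 \<mapsto> AInt, x2 \<mapsto> AInt] (K Kop) 0 ABool\<rbrakk>
    \<Longrightarrow> typed K \<Sigma> [x1 \<mapsto> AInt, x2 \<mapsto> AInt] (K Kop) 0 (EOp bop x1 x2) ABool"
| t_op_arith: "\<lbrakk>bop \<in> {Plus, Minus, Times, Div, Mod}; x1 \<noteq> x2; ok [x1 \<mapsto> AInt, x2 \<mapsto> AInt] (K Kop) 0 AInt\<rbrakk>
    \<Longrightarrow> typed K \<Sigma> [x1 \<mapsto> AInt, x2 \<mapsto> AInt] (K Kop) 0 (EOp bop x1 x2) AInt"
| t_app: "\<lbrakk>(A1, q, q', A2) \<in> \<Sigma> f; 0 \<le> q; ok [x \<mapsto> A1] (q + K Kapp) q' A2\<rbrakk>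
    \<Longrightarrow> typed K \<Sigma> [x \<mapsto> A1] (q + K Kapp) q' (EApp f x) A2"
| t_let: "\<lbrakk>typed K \<Sigma> \<Gamma>1 (q - K Klet) q1 e1 A1; typed K \<Sigma> (\<Gamma>2(x \<mapsto> A1)) q1 q' e2 A2;
           dom \<Gamma>1 \<inter> dom \<Gamma>2 = {}; x \<notin> dom \<Gamma>2; ok (\<Gamma>1 ++ \<Gamma>2) q q' A2\<rbrakk>
    \<Longrightarrow> typed K \<Sigma> (\<Gamma>1 ++ \<Gamma>2) q q' (ELet x e1 e2) A2"
| t_if: "\<lbrakk>typed K \<Sigma> \<Gamma> (q - K Kcond) q' et A; typed K \<Sigma> \<Gamma> (q - K Kcond) q' ef A;
          x \<notin> dom \<Gamma>; ok (\<Gamma>(x \<mapsto> ABool)) q q' A\<rbrakk>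
    \<Longrightarrow> typed K \<Sigma> (\<Gamma>(x \<mapsto> ABool)) q q' (EIf x et ef) A"
| t_pair: "\<lbrakk>x1 \<noteq> x2; ok [x1 \<mapsto> A1, x2 \<mapsto> A2] (K Kpair) 0 (AProd A1 A2)\<rbrakk>
    \<Longrightarrow> typed K \<Sigma> [x1 \<mapsto> A1, x2 \<mapsto> A2] (K Kpair) 0 (EPair x1 x2) (AProd A1 A2)"
| t_matchP: "\<lbrakk>typed K \<Sigma> (\<Gamma>(x1 \<mapsto> A1, x2 \<mapsto> A2)) (q - K KmatchP) q' e A;
              x1 \<noteq> x2; x1 \<notin> dom \<Gamma>; x2 \<notin> dom \<Gamma>; x \<notin> dom \<Gamma>;
              ok (\<Gamma>(x \<mapsto> AProd A1 A2)) q q' A\<rbrakk>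
    \<Longrightarrow> typed K \<Sigma> (\<Gamma>(x \<mapsto> AProd A1 A2)) q q' (EMatchP x x1 x2 e) A"
| t_cons: "\<lbrakk>xh \<noteq> xt; ok [xh \<mapsto> A, xt \<mapsto> AList p A] (p + K Kcons) 0 (AList p A)\<rbrakk>
    \<Longrightarrow> typed K \<Sigma> [xh \<mapsto> A, xt \<mapsto> AList p A] (p + K Kcons) 0 (ECons xh xt) (AList p A)"
| t_matchL: "\<lbrakk>typed K \<Sigma> \<Gamma> (q - K KmatchN) q' e1 B;
              typed K \<Sigma> (\<Gamma>(xh \<mapsto> A, xt \<mapsto> AList p A)) (q + p - K KmatchL) q' e2 B;
              xh \<noteq> xt; xh \<notin> dom \<Gamma>; xt \<notin> dom \<Gamma>; x \<notin> dom \<Gamma>;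
              ok (\<Gamma>(x \<mapsto> AList p A)) q q' B\<rbrakk>
    \<Longrightarrow> typed K \<Sigma> (\<Gamma>(x \<mapsto> AList p A)) q q' (EMatchL x e1 xh xt e2) B"
| t_share: "\<lbrakk>typed K \<Sigma> (\<Gamma>(x1 \<mapsto> A1, x2 \<mapsto> A2)) q q' e B; share A A1 A2;
             x1 \<noteq> x2; x1 \<notin> dom \<Gamma>; x2 \<notin> dom \<Gamma>; x \<notin> dom \<Gamma>; ok (\<Gamma>(x \<mapsto> A)) q q' B\<rbrakk>
    \<Longrightarrow> typed K \<Sigma> (\<Gamma>(x \<mapsto> A)) q q' (EShare x x1 x2 e) B"
| t_relax: "\<lbrakk>typed K \<Sigma> \<Gamma> p p' e A; q \<ge> p; q - p \<le> q' - p'; ok \<Gamma> q q' A\<rbrakk>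
    \<Longrightarrow> typed K \<Sigma> \<Gamma> q q' e A"
| t_weak: "\<lbrakk>typed K \<Sigma> \<Gamma> q q' e B; share A A A; x \<notin> dom \<Gamma>; ok (\<Gamma>(x \<mapsto> A)) q q' B\<rbrakk>
    \<Longrightarrow> typed K \<Sigma> (\<Gamma>(x \<mapsto> A)) q q' e B"
| t_sub: "\<lbrakk>typed K \<Sigma> \<Gamma> q q' e A; subty A B; ok \<Gamma> q q' B\<rbrakk>
    \<Longrightarrow> typed K \<Sigma> \<Gamma> q q' e B"
| t_super: "\<lbrakk>typed K \<Sigma> (\<Gamma>(x \<mapsto> B)) q q' e C; subty A B; x \<notin> dom \<Gamma>; ok (\<Gamma>(x \<mapsto> A)) q q' C\<rbrakk>
    \<Longrightarrow> typed K \<Sigma> (\<Gamma>(x \<mapsto> A)) q q' e C"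

definition sig_ok :: "'f sig \<Rightarrow> bool" where
  "sig_ok \<Sigma> \<longleftrightarrow> (\<forall>f. \<Sigma> f \<noteq> {})"

definition well_typed_prog :: "costs \<Rightarrow> 'f sig \<Rightarrow> ('f \<Rightarrow> 'x) \<Rightarrow> ('f \<Rightarrow> ('x, 'f) expr) \<Rightarrow> bool" where
  "well_typed_prog K \<Sigma> par body \<longleftrightarrow>
     (\<forall>f A1 q q' A2. (A1, q, q', A2) \<in> \<Sigma> f \<longrightarrow> typed K \<Sigma> [par f \<mapsto> A1] q q' (body f) A2)"

end

theory Submission imports Defs begin

text \<open>A typing of \<open>e\<close> in context \<open>\<Gamma>\<close> with annotations \<open>q, q'\<close> and result type \<open>A\<close>
certifies the net lower bound \<open>q + \<Phi>\<^sub>E(\<Gamma>) - q' - \<Phi>(v:A)\<close>, and every run of \<open>e\<close> from \<open>p\<close>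
to \<open>p'\<close> resources costs \<open>p - p'\<close>, at least this bound. This is shown by induction on the
evaluation, inverting the typing derivation up to its structural rules: relaxation only
lowers \<open>q - q'\<close>, weakening adds a variable of potential zero (its type shares into two copies
of itself), and subtyping raises the output or lowers the input potential. Each
syntax-directed rule charges exactly the cost constant of the matching evaluation rule and
moves potential between context and result without loss.\<close>

abbreviation net_lower_bound :: "'x env \<Rightarrow> 'x ctx \<Rightarrow> rat \<Rightarrow> rat \<Rightarrow> val \<Rightarrow> aty \<Rightarrow> rat" where
  "net_lower_bound E \<Gamma> q q' v A \<equiv> q + pot_env E \<Gamma> - q' - pot v A"

lemma typed_ok: "typed K \<Sigma> \<Gamma> q q' e A \<Longrightarrow> ok \<Gamma> q q' A"
  by (induction rule: typed.induct) assumption+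

lemma typed_finite_dom: "typed K \<Sigma> \<Gamma> q q' e A \<Longrightarrow> finite (dom \<Gamma>)"
  using typed_ok unfolding ok_def wf_ctx_def by blast

lemma pot_atomic [simp]: "pot v AUnit = 0" "pot v ABool = 0" "pot v AInt = 0"
  by (cases v; simp)+

lemma pot_share: "share A A1 A2 \<Longrightarrow> pot v A = pot v A1 + pot v A2"
proof (induction arbitrary: v rule: share.induct)
  case (sh_prod A A1 A2 B B1 B2)
  then show ?case by (cases v) auto
next
  case (sh_list A A1 A2 p p1 p2)
  then show ?case by (cases v) (auto simp: sum_list_addf algebra_simps)
qed simp_all

lemma pot_share_self: "share A A A \<Longrightarrow> pot v A = 0"
  using pot_share[of A A A v] by linarith

lemma pot_subty_mono: "subty A B \<Longrightarrow> pot v A \<le> pot v B"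
proof (induction arbitrary: v rule: subty.induct)
  case (st_list A1 A2 p1 p2)
  then show ?case
    by (cases v) (simp_all add: add_mono mult_left_mono sum_list_mono)
next
  case (st_prod A1 A2 B1 B2)
  then show ?case by (cases v) (simp_all add: add_mono)
qed simp_all

lemma pot_env_empty [simp]: "pot_env E Map.empty = 0"
  by (simp add: pot_env_def)

lemma pot_env_singleton [simp]: "pot_env E [x \<mapsto> A] = pot (the (E x)) A"
  by (simp add: pot_env_def)

lemma pot_env_pair [simp]:
  "x1 \<noteq> x2 \<Longrightarrow> pot_env E [x1 \<mapsto> A1, x2 \<mapsto> A2] = pot (the (E x1)) A1 + pot (the (E x2)) A2"
  by (simp add: pot_env_def)

lemma pot_env_upd:
  "finite (dom \<Gamma>) \<Longrightarrow> x \<notin> dom \<Gamma> \<Longrightarrow> pot_env E (\<Gamma>(x \<mapsto> A)) = pot_env E \<Gamma> + pot (the (E x)) A"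
  unfolding pot_env_def by (simp add: sum.insert) (rule sum.cong; auto)

lemma pot_env_cong: "(\<And>y. y \<in> dom \<Gamma> \<Longrightarrow> E' y = E y) \<Longrightarrow> pot_env E' \<Gamma> = pot_env E \<Gamma>"
  unfolding pot_env_def by (rule sum.cong) auto

lemma pot_env_map_add:
  assumes "finite (dom \<Gamma>1)" "finite (dom \<Gamma>2)" "dom \<Gamma>1 \<inter> dom \<Gamma>2 = {}"
  shows "pot_env E (\<Gamma>1 ++ \<Gamma>2) = pot_env E \<Gamma>1 + pot_env E \<Gamma>2"
proof -
  have "pot_env E (\<Gamma>1 ++ \<Gamma>2) =
      (\<Sum>x\<in>dom \<Gamma>1. pot (the (E x)) (the ((\<Gamma>1 ++ \<Gamma>2) x))) + (\<Sum>x\<in>dom \<Gamma>2. pot (the (E x)) (the ((\<Gamma>1 ++ \<Gamma>2) x)))"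
    using assms unfolding pot_env_def by (simp add: Un_commute sum.union_disjoint)
  also have "\<dots> = pot_env E \<Gamma>1 + pot_env E \<Gamma>2"
    unfolding pot_env_def using assms(3)
    by (intro arg_cong2[where f="(+)"] sum.cong) (auto simp: map_add_def split: option.splits)
  finally show ?thesis .
qed

text \<open>Typing judgements whose last rule is syntax-directed (relaxation, weakening, sub- and
supertyping excluded); their premises are ordinary judgements.\<close>

inductive typed_sd :: "costs \<Rightarrow> 'f sig \<Rightarrow> 'x ctx \<Rightarrow> rat \<Rightarrow> rat \<Rightarrow> ('x, 'f) expr \<Rightarrow> aty \<Rightarrow> bool"
  for K :: costs and \<Sigma> :: "'f sig" where
  s_unit: "ok (Map.empty :: 'x ctx) (K Kunit) 0 AUnit \<Longrightarrow> typed_sd K \<Sigma> Map.empty (K Kunit) 0 EUnit AUnit"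
| s_true: "ok (Map.empty :: 'x ctx) (K Kbool) 0 ABool \<Longrightarrow> typed_sd K \<Sigma> Map.empty (K Kbool) 0 ETrue ABool"
| s_false: "ok (Map.empty :: 'x ctx) (K Kbool) 0 ABool \<Longrightarrow> typed_sd K \<Sigma> Map.empty (K Kbool) 0 EFalse ABool"
| s_int: "ok (Map.empty :: 'x ctx) (K Kint) 0 AInt \<Longrightarrow> typed_sd K \<Sigma> Map.empty (K Kint) 0 (ENum n) AInt"
| s_nil: "ok (Map.empty :: 'x ctx) (K Knil) 0 (AList p A) \<Longrightarrow> typed_sd K \<Sigma> Map.empty (K Knil) 0 ENil (AList p A)"
| s_var: "ok [x \<mapsto> A] (K Kvar) 0 A \<Longrightarrow> typed_sd K \<Sigma> [x \<mapsto> A] (K Kvar) 0 (EVar x) A"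
| s_op_bool: "\<lbrakk>bop \<in> {And, Or}; x1 \<noteq> x2; ok [x1 \<mapsto> ABool, x2 \<mapsto> ABool] (K Kop) 0 ABool\<rbrakk>
    \<Longrightarrow> typed_sd K \<Sigma> [x1 \<mapsto> ABool, x2 \<mapsto> ABool] (K Kop) 0 (EOp bop x1 x2) ABool"
| s_op_cmp: "\<lbrakk>bop \<in> {Eq, Neq, Lt, Gt}; x1 \<noteq> x2; ok [x1 \<mapsto> AInt, x2 \<mapsto> AInt] (K Kop) 0 ABool\<rbrakk>
    \<Longrightarrow> typed_sd K \<Sigma> [x1 \<mapsto> AInt, x2 \<mapsto> AInt] (K Kop) 0 (EOp bop x1 x2) ABool"
| s_op_arith: "\<lbrakk>bop \<in> {Plus, Minus, Times, Div, Mod}; x1 \<noteq> x2; ok [x1 \<mapsto> AInt, x2 \<mapsto> AInt] (K Kop) 0 AInt\<rbrakk>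
    \<Longrightarrow> typed_sd K \<Sigma> [x1 \<mapsto> AInt, x2 \<mapsto> AInt] (K Kop) 0 (EOp bop x1 x2) AInt"
| s_app: "\<lbrakk>(A1, q, q', A2) \<in> \<Sigma> f; 0 \<le> q; ok [x \<mapsto> A1] (q + K Kapp) q' A2\<rbrakk>
    \<Longrightarrow> typed_sd K \<Sigma> [x \<mapsto> A1] (q + K Kapp) q' (EApp f x) A2"
| s_let: "\<lbrakk>typed K \<Sigma> \<Gamma>1 (q - K Klet) q1 e1 A1; typed K \<Sigma> (\<Gamma>2(x \<mapsto> A1)) q1 q' e2 A2;
           dom \<Gamma>1 \<inter> dom \<Gamma>2 = {}; x \<notin> dom \<Gamma>2; ok (\<Gamma>1 ++ \<Gamma>2) q q' A2\<rbrakk>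
    \<Longrightarrow> typed_sd K \<Sigma> (\<Gamma>1 ++ \<Gamma>2) q q' (ELet x e1 e2) A2"
| s_if: "\<lbrakk>typed K \<Sigma> \<Gamma> (q - K Kcond) q' et A; typed K \<Sigma> \<Gamma> (q - K Kcond) q' ef A;
          x \<notin> dom \<Gamma>; ok (\<Gamma>(x \<mapsto> ABool)) q q' A\<rbrakk>
    \<Longrightarrow> typed_sd K \<Sigma> (\<Gamma>(x \<mapsto> ABool)) q q' (EIf x et ef) A"
| s_pair: "\<lbrakk>x1 \<noteq> x2; ok [x1 \<mapsto> A1, x2 \<mapsto> A2] (K Kpair) 0 (AProd A1 A2)\<rbrakk>
    \<Longrightarrow> typed_sd K \<Sigma> [x1 \<mapsto> A1, x2 \<mapsto> A2] (K Kpair) 0 (EPair x1 x2) (AProd A1 A2)"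
| s_matchP: "\<lbrakk>typed K \<Sigma> (\<Gamma>(x1 \<mapsto> A1, x2 \<mapsto> A2)) (q - K KmatchP) q' e A;
              x1 \<noteq> x2; x1 \<notin> dom \<Gamma>; x2 \<notin> dom \<Gamma>; x \<notin> dom \<Gamma>;
              ok (\<Gamma>(x \<mapsto> AProd A1 A2)) q q' A\<rbrakk>
    \<Longrightarrow> typed_sd K \<Sigma> (\<Gamma>(x \<mapsto> AProd A1 A2)) q q' (EMatchP x x1 x2 e) A"
| s_cons: "\<lbrakk>xh \<noteq> xt; ok [xh \<mapsto> A, xt \<mapsto> AList p A] (p + K Kcons) 0 (AList p A)\<rbrakk>
    \<Longrightarrow> typed_sd K \<Sigma> [xh \<mapsto> A, xt \<mapsto> AList p A] (p + K Kcons) 0 (ECons xh xt) (AList p A)"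
| s_matchL: "\<lbrakk>typed K \<Sigma> \<Gamma> (q - K KmatchN) q' e1 B;
              typed K \<Sigma> (\<Gamma>(xh \<mapsto> A, xt \<mapsto> AList p A)) (q + p - K KmatchL) q' e2 B;
              xh \<noteq> xt; xh \<notin> dom \<Gamma>; xt \<notin> dom \<Gamma>; x \<notin> dom \<Gamma>;
              ok (\<Gamma>(x \<mapsto> AList p A)) q q' B\<rbrakk>
    \<Longrightarrow> typed_sd K \<Sigma> (\<Gamma>(x \<mapsto> AList p A)) q q' (EMatchL x e1 xh xt e2) B"
| s_share: "\<lbrakk>typed K \<Sigma> (\<Gamma>(x1 \<mapsto> A1, x2 \<mapsto> A2)) q q' e B; share A A1 A2;
             x1 \<noteq> x2; x1 \<notin> dom \<Gamma>; x2 \<notin> dom \<Gamma>; x \<notin> dom \<Gamma>; ok (\<Gamma>(x \<mapsto> A)) q q' B\<rbrakk>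
    \<Longrightarrow> typed_sd K \<Sigma> (\<Gamma>(x \<mapsto> A)) q q' (EShare x x1 x2 e) B"

lemma typed_bound_from_sd:
  assumes "typed K \<Sigma> \<Gamma> q q' e A"
    and "\<And>\<Gamma> q q' A. typed_sd K \<Sigma> \<Gamma> q q' e A \<Longrightarrow> net_lower_bound E \<Gamma> q q' v A \<le> c"
  shows "net_lower_bound E \<Gamma> q q' v A \<le> c"
  using assms
proof (induction rule: typed.induct)
  case (t_relax \<Gamma> p p' e A q q')
  have "net_lower_bound E \<Gamma> p p' v A \<le> c" using t_relax.prems by (rule t_relax.IH)
  with \<open>q \<ge> p\<close> \<open>q - p \<le> q' - p'\<close> show ?case by linarith
next
  case (t_weak \<Gamma> q q' e B A x)
  have "net_lower_bound E \<Gamma> q q' v B \<le> c" using t_weak.prems by (rule t_weak.IH)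
  moreover have "pot_env E (\<Gamma>(x \<mapsto> A)) = pot_env E \<Gamma>"
    using pot_env_upd[OF typed_finite_dom[OF t_weak.hyps(1)] t_weak.hyps(3)]
      pot_share_self[OF t_weak.hyps(2)]
    by simp
  ultimately show ?case by linarith
next
  case (t_sub \<Gamma> q q' e A B)
  have "net_lower_bound E \<Gamma> q q' v A \<le> c" using t_sub.prems by (rule t_sub.IH)
  with pot_subty_mono[OF t_sub.hyps(2), of v] show ?case by linarith
next
  case (t_super \<Gamma> x B q q' e C A)
  have fin: "finite (dom \<Gamma>)" using typed_finite_dom[OF t_super.hyps(1)] by simp
  have "net_lower_bound E (\<Gamma>(x \<mapsto> B)) q q' v C \<le> c" using t_super.prems by (rule t_super.IH)
  with pot_env_upd[OF fin t_super.hyps(3), of E A] pot_env_upd[OF fin t_super.hyps(3), of E B]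
    pot_subty_mono[OF t_super.hyps(2), of "the (E x)"]
  show ?case by linarith
qed (blast intro: typed_sd.intros)+

lemma let_bound:
  assumes typed: "typed K \<Sigma> \<Gamma> q q' (ELet x e1 e2) A"
    and IH1: "\<And>\<Gamma> q q' A. typed K \<Sigma> \<Gamma> q q' e1 A \<Longrightarrow> net_lower_bound E \<Gamma> q q' v1 A \<le> c1"
    and IH2: "\<And>\<Gamma> q q' A. typed K \<Sigma> \<Gamma> q q' e2 A \<Longrightarrow> net_lower_bound (E(x \<mapsto> v1)) \<Gamma> q q' v A \<le> c2"
  shows "net_lower_bound E \<Gamma> q q' v A \<le> K Klet + c1 + c2"
proof (rule typed_bound_from_sd[OF typed])
  fix \<Gamma> q q' A assume "typed_sd K \<Sigma> \<Gamma> q q' (ELet x e1 e2) A"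
  then obtain \<Gamma>1 \<Gamma>2 q1 A1 where
    t1: "typed K \<Sigma> \<Gamma>1 (q - K Klet) q1 e1 A1" and t2: "typed K \<Sigma> (\<Gamma>2(x \<mapsto> A1)) q1 q' e2 A"
    and disj: "dom \<Gamma>1 \<inter> dom \<Gamma>2 = {}" and x: "x \<notin> dom \<Gamma>2" and \<Gamma>: "\<Gamma> = \<Gamma>1 ++ \<Gamma>2"
    by cases auto
  have fin1: "finite (dom \<Gamma>1)" using typed_finite_dom[OF t1] .
  have fin2: "finite (dom \<Gamma>2)" using typed_finite_dom[OF t2] by simp
  have "pot_env (E(x \<mapsto> v1)) \<Gamma>2 = pot_env E \<Gamma>2"
    by (rule pot_env_cong) (use x in auto)
  then have "pot_env (E(x \<mapsto> v1)) (\<Gamma>2(x \<mapsto> A1)) = pot_env E \<Gamma>2 + pot v1 A1"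
    using pot_env_upd[OF fin2 x] by simp
  moreover have "pot_env E \<Gamma> = pot_env E \<Gamma>1 + pot_env E \<Gamma>2"
    using \<Gamma> pot_env_map_add[OF fin1 fin2 disj] by simp
  ultimately show "net_lower_bound E \<Gamma> q q' v A \<le> K Klet + c1 + c2"
    using IH1[OF t1] IH2[OF t2] by linarith
qed

lemma if_bound:
  assumes typed: "typed K \<Sigma> \<Gamma> q q' (EIf x et ef) A"
    and IH: "\<And>\<Gamma> q q' A. typed K \<Sigma> \<Gamma> q q' eb A \<Longrightarrow> net_lower_bound E \<Gamma> q q' v A \<le> c"
    and branch: "eb = et \<or> eb = ef"
  shows "net_lower_bound E \<Gamma> q q' v A \<le> K Kcond + c"
proof (rule typed_bound_from_sd[OF typed])
  fix \<Gamma> q q' A assume "typed_sd K \<Sigma> \<Gamma> q q' (EIf x et ef) A"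
  then obtain \<Gamma>0 where
    tt: "typed K \<Sigma> \<Gamma>0 (q - K Kcond) q' et A" and tf: "typed K \<Sigma> \<Gamma>0 (q - K Kcond) q' ef A"
    and x: "x \<notin> dom \<Gamma>0" and \<Gamma>: "\<Gamma> = \<Gamma>0(x \<mapsto> ABool)"
    by cases auto
  have "pot_env E \<Gamma> = pot_env E \<Gamma>0"
    using \<Gamma> pot_env_upd[OF typed_finite_dom[OF tt] x] by simp
  moreover have "typed K \<Sigma> \<Gamma>0 (q - K Kcond) q' eb A" using branch tt tf by auto
  ultimately show "net_lower_bound E \<Gamma> q q' v A \<le> K Kcond + c"
    using IH by fastforce
qed

lemma matchP_bound:
  assumes typed: "typed K \<Sigma> \<Gamma> q q' (EMatchP x x1 x2 e) A"
    and Ex: "E x = Some (PairV v1 v2)"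
    and IH: "\<And>\<Gamma> q q' A. typed K \<Sigma> \<Gamma> q q' e A \<Longrightarrow>
               net_lower_bound (E(x1 \<mapsto> v1, x2 \<mapsto> v2)) \<Gamma> q q' v A \<le> c"
  shows "net_lower_bound E \<Gamma> q q' v A \<le> K KmatchP + c"
proof (rule typed_bound_from_sd[OF typed])
  fix \<Gamma> q q' A assume "typed_sd K \<Sigma> \<Gamma> q q' (EMatchP x x1 x2 e) A"
  then obtain \<Gamma>0 A1 A2 where
    t: "typed K \<Sigma> (\<Gamma>0(x1 \<mapsto> A1, x2 \<mapsto> A2)) (q - K KmatchP) q' e A"
    and fresh: "x1 \<noteq> x2" "x1 \<notin> dom \<Gamma>0" "x2 \<notin> dom \<Gamma>0" "x \<notin> dom \<Gamma>0"
    and \<Gamma>: "\<Gamma> = \<Gamma>0(x \<mapsto> AProd A1 A2)"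
    by cases auto
  have fin: "finite (dom \<Gamma>0)" using typed_finite_dom[OF t] by simp
  have "pot_env (E(x1 \<mapsto> v1, x2 \<mapsto> v2)) \<Gamma>0 = pot_env E \<Gamma>0"
    by (rule pot_env_cong) (use fresh in auto)
  then have "pot_env (E(x1 \<mapsto> v1, x2 \<mapsto> v2)) (\<Gamma>0(x1 \<mapsto> A1, x2 \<mapsto> A2)) = pot_env E \<Gamma>0 + pot v1 A1 + pot v2 A2"
    using fresh by (simp add: pot_env_upd fin)
  moreover have "pot_env E \<Gamma> = pot_env E \<Gamma>0 + pot v1 A1 + pot v2 A2"
    using \<Gamma> pot_env_upd[OF fin fresh(4)] Ex by simp
  ultimately show "net_lower_bound E \<Gamma> q q' v A \<le> K KmatchP + c"
    using IH[OF t] by linarith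
qed

lemma matchN_bound:
  assumes typed: "typed K \<Sigma> \<Gamma> q q' (EMatchL x e1 xh xt e2) B"
    and Ex: "E x = Some (ListV [])"
    and IH: "\<And>\<Gamma> q q' A. typed K \<Sigma> \<Gamma> q q' e1 A \<Longrightarrow> net_lower_bound E \<Gamma> q q' v A \<le> c"
  shows "net_lower_bound E \<Gamma> q q' v B \<le> K KmatchN + c"
proof (rule typed_bound_from_sd[OF typed])
  fix \<Gamma> q q' B assume "typed_sd K \<Sigma> \<Gamma> q q' (EMatchL x e1 xh xt e2) B"
  then obtain \<Gamma>0 p A where t: "typed K \<Sigma> \<Gamma>0 (q - K KmatchN) q' e1 B"
    and x: "x \<notin> dom \<Gamma>0" and \<Gamma>: "\<Gamma> = \<Gamma>0(x \<mapsto> AList p A)"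
    by cases auto
  have "pot_env E \<Gamma> = pot_env E \<Gamma>0"
    using \<Gamma> pot_env_upd[OF typed_finite_dom[OF t] x] Ex by simp
  then show "net_lower_bound E \<Gamma> q q' v B \<le> K KmatchN + c"
    using IH[OF t] by linarith
qed

text \<open>The potential \<open>p\<close> of the head cell released by the match pays for the extra
\<open>p\<close> in the annotation \<open>q + p - K\<^sup>m\<^sup>a\<^sup>t\<^sup>c\<^sup>h\<^sup>L\<close> of the cons branch.\<close>

lemma matchC_bound:
  assumes typed: "typed K \<Sigma> \<Gamma> q q' (EMatchL x e1 xh xt e2) B"
    and Ex: "E x = Some (ListV (v1 # vs))"
    and IH: "\<And>\<Gamma> q q' A. typed K \<Sigma> \<Gamma> q q' e2 A \<Longrightarrow>
               net_lower_bound (E(xh \<mapsto> v1, xt \<mapsto> ListV vs)) \<Gamma> q q' v A \<le> c"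
  shows "net_lower_bound E \<Gamma> q q' v B \<le> K KmatchL + c"
proof (rule typed_bound_from_sd[OF typed])
  fix \<Gamma> q q' B assume "typed_sd K \<Sigma> \<Gamma> q q' (EMatchL x e1 xh xt e2) B"
  then obtain \<Gamma>0 p A where
    t: "typed K \<Sigma> (\<Gamma>0(xh \<mapsto> A, xt \<mapsto> AList p A)) (q + p - K KmatchL) q' e2 B"
    and fresh: "xh \<noteq> xt" "xh \<notin> dom \<Gamma>0" "xt \<notin> dom \<Gamma>0" "x \<notin> dom \<Gamma>0"
    and \<Gamma>: "\<Gamma> = \<Gamma>0(x \<mapsto> AList p A)"
    by cases auto
  have fin: "finite (dom \<Gamma>0)" using typed_finite_dom[OF t] by simp
  have "pot_env (E(xh \<mapsto> v1, xt \<mapsto> ListV vs)) \<Gamma>0 = pot_env E \<Gamma>0"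
    by (rule pot_env_cong) (use fresh in auto)
  then have "pot_env (E(xh \<mapsto> v1, xt \<mapsto> ListV vs)) (\<Gamma>0(xh \<mapsto> A, xt \<mapsto> AList p A)) =
      pot_env E \<Gamma>0 + pot v1 A + pot (ListV vs) (AList p A)"
    using fresh by (simp add: pot_env_upd fin)
  moreover have "pot_env E \<Gamma> = pot_env E \<Gamma>0 + p + pot v1 A + pot (ListV vs) (AList p A)"
    using \<Gamma> pot_env_upd[OF fin fresh(4)] Ex by (simp add: algebra_simps)
  ultimately show "net_lower_bound E \<Gamma> q q' v B \<le> K KmatchL + c"
    using IH[OF t] by linarith
qed

lemma share_bound:
  assumes typed: "typed K \<Sigma> \<Gamma> q q' (EShare x x1 x2 e) B"
    and Ex: "E x = Some u"
    and IH: "\<And>\<Gamma> q q' A. typed K \<Sigma> \<Gamma> q q' e A \<Longrightarrow>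
               net_lower_bound ((E(x := None))(x1 \<mapsto> u, x2 \<mapsto> u)) \<Gamma> q q' v A \<le> c"
  shows "net_lower_bound E \<Gamma> q q' v B \<le> c"
proof (rule typed_bound_from_sd[OF typed])
  fix \<Gamma> q q' B assume "typed_sd K \<Sigma> \<Gamma> q q' (EShare x x1 x2 e) B"
  then obtain \<Gamma>0 A A1 A2 where
    t: "typed K \<Sigma> (\<Gamma>0(x1 \<mapsto> A1, x2 \<mapsto> A2)) q q' e B" and sh: "share A A1 A2"
    and fresh: "x1 \<noteq> x2" "x1 \<notin> dom \<Gamma>0" "x2 \<notin> dom \<Gamma>0" "x \<notin> dom \<Gamma>0"
    and \<Gamma>: "\<Gamma> = \<Gamma>0(x \<mapsto> A)"
    by cases auto
  have fin: "finite (dom \<Gamma>0)" using typed_finite_dom[OF t] by simp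
  have "pot_env ((E(x := None))(x1 \<mapsto> u, x2 \<mapsto> u)) \<Gamma>0 = pot_env E \<Gamma>0"
    by (rule pot_env_cong) (use fresh in auto)
  then have "pot_env ((E(x := None))(x1 \<mapsto> u, x2 \<mapsto> u)) (\<Gamma>0(x1 \<mapsto> A1, x2 \<mapsto> A2)) =
      pot_env E \<Gamma>0 + pot u A1 + pot u A2"
    using fresh by (simp add: pot_env_upd fin)
  moreover have "pot_env E \<Gamma> = pot_env E \<Gamma>0 + pot u A1 + pot u A2"
    using \<Gamma> pot_env_upd[OF fin fresh(4)] Ex pot_share[OF sh] by simp
  ultimately show "net_lower_bound E \<Gamma> q q' v B \<le> c"
    using IH[OF t] by linarith
qed

lemma app_bound:
  assumes typed: "typed K \<Sigma> \<Gamma> q q' (EApp f x) A"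
    and prog: "well_typed_prog K \<Sigma> par body"
    and Ex: "E x = Some u"
    and IH: "\<And>\<Gamma> q q' A. typed K \<Sigma> \<Gamma> q q' (body f) A \<Longrightarrow>
               net_lower_bound (E(par f \<mapsto> u)) \<Gamma> q q' v A \<le> c"
  shows "net_lower_bound E \<Gamma> q q' v A \<le> K Kapp + c"
proof (rule typed_bound_from_sd[OF typed])
  fix \<Gamma> q q' A assume "typed_sd K \<Sigma> \<Gamma> q q' (EApp f x) A"
  then obtain A1 qf qf' where sig: "(A1, qf, qf', A) \<in> \<Sigma> f"
    and \<Gamma>: "\<Gamma> = [x \<mapsto> A1]" and q: "q = qf + K Kapp" "q' = qf'"
    by cases auto
  have "typed K \<Sigma> [par f \<mapsto> A1] qf qf' (body f) A"
    using prog sig unfolding well_typed_prog_def by blast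
  from IH[OF this] show "net_lower_bound E \<Gamma> q q' v A \<le> K Kapp + c"
    using \<Gamma> q Ex by simp
qed

lemma net_lower_bound_le_net_cost:
  assumes prog: "well_typed_prog K \<Sigma> par body"
  shows "eval K par body E p p' e v \<Longrightarrow> typed K \<Sigma> \<Gamma> q q' e A \<Longrightarrow>
    net_lower_bound E \<Gamma> q q' v A \<le> p - p'"
proof (induction arbitrary: \<Gamma> q q' A rule: eval.induct)
  case ev_app
  show ?case using app_bound[OF ev_app.prems prog ev_app.hyps(1) ev_app.IH] by simp
next
  case ev_let
  show ?case using let_bound[OF ev_let.prems ev_let.IH] by simp
next
  case ev_if_true
  show ?case using if_bound[OF ev_if_true.prems ev_if_true.IH] by simp
next
  case ev_if_false
  show ?case using if_bound[OF ev_if_false.prems ev_if_false.IH] by simp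
next
  case ev_matchP
  show ?case using matchP_bound[OF ev_matchP.prems ev_matchP.hyps(1) ev_matchP.IH] by simp
next
  case ev_matchN
  show ?case using matchN_bound[OF ev_matchN.prems ev_matchN.hyps(1) ev_matchN.IH] by simp
next
  case ev_matchC
  show ?case using matchC_bound[OF ev_matchC.prems ev_matchC.hyps(1) ev_matchC.IH] by simp
next
  case ev_share
  show ?case using share_bound[OF ev_share.prems ev_share.hyps(1) ev_share.IH] by simp
qed (erule typed_bound_from_sd, erule typed_sd.cases; auto simp: algebra_simps)+

theorem theorem5:
  fixes K :: costs and \<Sigma> :: "'f sig" and par :: "'f \<Rightarrow> 'x" and body :: "'f \<Rightarrow> ('x, 'f) expr"
    and E :: "'x env" and \<Gamma> :: "'x ctx" and e :: "('x, 'f) expr" and v :: val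
    and q q' :: rat and A :: aty
  assumes "sig_ok \<Sigma>"
    and "well_typed_prog K \<Sigma> par body"
    and "env_typed E \<Gamma>"
    and "evaluates K par body E e v"
    and "typed K \<Sigma> \<Gamma> q q' e A"
  shows "\<forall>p r. 0 \<le> p \<longrightarrow> 0 \<le> r \<longrightarrow> p < q + pot_env E \<Gamma> + r \<longrightarrow>
           \<not> (\<exists>p'. 0 \<le> p' \<and> eval K par body E p p' e v \<and> p' \<ge> q' + pot v A + r)"
proof (intro allI impI notI)
  fix p r assume p: "p < q + pot_env E \<Gamma> + r"
  assume "\<exists>p'. 0 \<le> p' \<and> eval K par body E p p' e v \<and> p' \<ge> q' + pot v A + r"
  then obtain p' where "eval K par body E p p' e v" and p': "p' \<ge> q' + pot v A + r" by blast
  from net_lower_bound_le_net_cost[OF assms(2) this(1) assms(5)] p p' show False by linarith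
qed

end
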